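(* Let $a_1,b_1>0$ and $\alpha>0$ with $\alpha\neq 1$, and set $a_2=\alpha a_1$, $b_2=\alpha b_1$ (so that $p_2=\alpha p_1$). Then, with $C_1,C_2$ as defined in the context, $\sup_{\omega\ge0}|C_1(j\omega)C_2(j\omega)|<1$.
   Context: For constants $a_1,b_1,a_2,b_2>0$ and complex $s$, set $p_1(s)=a_1+b_1 s$, $p_2(s)=a_2+b_2 s$, $q=p_1+p_2$, and $m(s)=(s^2+q)\sqrt{1-\frac{4p_1p_2}{(s^2+q)^2}}$ with $\sqrt{\cdot}$ the principal complex square root (nonnegative real part), so $m^2=(s^2+q)^2-4p_1p_2$. Define $C_1=\frac{(s^2+q)-m}{2p_2}$ and $C_2=\frac{(s^2+q)-m}{2p_1}$. $j$ denotes the imaginary unit. *)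

theory Defs
  imports Complex_Main
begin

definition pf :: "real \<Rightarrow> real \<Rightarrow> complex \<Rightarrow> complex" where
  "pf a b s = complex_of_real a + complex_of_real b * s"

definition qf :: "real \<Rightarrow> real \<Rightarrow> real \<Rightarrow> real \<Rightarrow> complex \<Rightarrow> complex" where
  "qf a1 b1 a2 b2 s = pf a1 b1 s + pf a2 b2 s"

definition mf :: "real \<Rightarrow> real \<Rightarrow> real \<Rightarrow> real \<Rightarrow> complex \<Rightarrow> complex" where
  "mf a1 b1 a2 b2 s = (s^2 + qf a1 b1 a2 b2 s) *
     csqrt (1 - 4 * pf a1 b1 s * pf a2 b2 s / (s^2 + qf a1 b1 a2 b2 s)^2)"

definition C1 :: "real \<Rightarrow> real \<Rightarrow> real \<Rightarrow> real \<Rightarrow> complex \<Rightarrow> complex" where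
  "C1 a1 b1 a2 b2 s = ((s^2 + qf a1 b1 a2 b2 s) - mf a1 b1 a2 b2 s) / (2 * pf a2 b2 s)"

definition C2 :: "real \<Rightarrow> real \<Rightarrow> real \<Rightarrow> real \<Rightarrow> complex \<Rightarrow> complex" where
  "C2 a1 b1 a2 b2 s = ((s^2 + qf a1 b1 a2 b2 s) - mf a1 b1 a2 b2 s) / (2 * pf a1 b1 s)"

end

theory Submission
  imports Defs "HOL-Analysis.Analysis"
begin

text \<open>With \<open>p\<^sub>2 = \<alpha> p\<^sub>1\<close> and \<open>t = \<surd>(1 - 4 p\<^sub>1 p\<^sub>2 / (s\<^sup>2 + q)\<^sup>2)\<close>, the product \<open>C\<^sub>1 C\<^sub>2\<close> equals
  the Cayley transform \<open>(1 - t) / (1 + t)\<close>, whose modulus is below 1 exactly when \<open>Re t > 0\<close>,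
  i.e. when the radicand avoids the closed negative real axis. On the imaginary axis the radicand
  is \<open>1 - 4\<alpha> / \<rho>\<^sup>2\<close> with \<open>\<rho> = (s\<^sup>2 + q) / p\<^sub>1\<close>; here \<open>\<rho>\<close> is real only at \<open>\<omega> = 0\<close>, where it equals
  \<open>1 + \<alpha>\<close>, and \<open>(1 + \<alpha>)\<^sup>2 > 4\<alpha>\<close> for \<open>\<alpha> \<noteq> 1\<close>. Hence \<open>|C\<^sub>1 C\<^sub>2| < 1\<close> pointwise. As \<open>\<omega> \<rightarrow> \<infinity>\<close>,
  \<open>|\<rho>| \<rightarrow> \<infinity>\<close> and \<open>|(1 - t)/(1 + t)| \<le> 4\<alpha> / |\<rho>|\<^sup>2 \<rightarrow> 0\<close>, so the supremum is either at most 1/2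
  or the maximum of a continuous function on a compact interval, and in both cases below 1.\<close>

lemma bdd_above_SUP_less_on_atLeast:
  fixes f :: "real \<Rightarrow> real"
  assumes cont: "continuous_on {a..} f" and less: "\<And>x. x \<ge> a \<Longrightarrow> f x < b"
    and ev: "eventually (\<lambda>x. f x \<le> c) at_top" and "c < b"
  shows "bdd_above (f ` {a..}) \<and> (SUP x\<in>{a..}. f x) < b"
proof -
  obtain R where R: "\<And>x. x \<ge> R \<Longrightarrow> f x \<le> c"
    using ev by (auto simp: eventually_at_top_linorder)
  have "continuous_on {a..max a R} f"
    using cont by (rule continuous_on_subset) auto
  then obtain x0 where x0: "x0 \<in> {a..max a R}" and max: "\<And>y. y \<in> {a..max a R} \<Longrightarrow> f y \<le> f x0"
    using continuous_attains_sup[of "{a..max a R}" f] by auto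
  have bound: "f x \<le> max (f x0) c" if "x \<in> {a..}" for x
  proof (cases "x \<le> max a R")
    case False
    then show ?thesis using R[of x] by (auto simp: max_def split: if_splits)
  qed (use that max[of x] in auto)
  have "(SUP x\<in>{a..}. f x) \<le> max (f x0) c"
    by (rule cSUP_least) (use bound in auto)
  moreover have "max (f x0) c < b"
    using less[of x0] x0 \<open>c < b\<close> by auto
  moreover have "bdd_above (f ` {a..})"
    using bound by (intro bdd_aboveI2[where M = "max (f x0) c"]) auto
  ultimately show ?thesis
    by (auto simp: max_less_iff_conj)
qed

definition cayley :: "complex \<Rightarrow> complex" where
  "cayley t = (1 - t) / (1 + t)"

lemma norm_cayley_less_one:
  assumes "Re t > 0"
  shows "cmod (cayley t) < 1"
proof -
  have "cmod (1 - t)^2 < cmod (1 + t)^2"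
    using assms unfolding cmod_power2 by (simp add: power2_eq_square algebra_simps)
  then have "cmod (1 - t) < cmod (1 + t)"
    by (rule power_less_imp_less_base) simp
  moreover have "1 + t \<noteq> 0"
    using assms by (auto simp: complex_eq_iff)
  ultimately show ?thesis
    by (simp add: cayley_def norm_divide divide_less_eq)
qed

lemma norm_cayley_le:
  assumes "Re t \<ge> 0" and "t^2 = 1 - w"
  shows "cmod (cayley t) \<le> cmod w"
proof -
  have ge1: "cmod (1 + t) \<ge> 1"
    using assms(1) complex_Re_le_cmod[of "1 + t"] by simp
  then have "1 + t \<noteq> 0" by auto
  moreover have "(1 - t) * (1 + t) = w"
    using assms(2) by (simp add: algebra_simps power2_eq_square)
  ultimately have "cayley t = w / (1 + t)^2"
    by (metis cayley_def nonzero_mult_divide_mult_cancel_right power2_eq_square)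
  then have "cmod (cayley t) = cmod w / cmod (1 + t)^2"
    by (simp add: norm_divide norm_power)
  also have "\<dots> \<le> cmod w"
    using ge1 by (simp add: divide_le_eq mult_le_cancel_left1 one_le_power)
  finally show ?thesis .
qed

lemma Re_csqrt_pos:
  assumes "z \<notin> \<real>\<^sub>\<le>\<^sub>0"
  shows "Re (csqrt z) > 0"
proof (rule ccontr)
  define w where "w = csqrt z"
  assume "\<not> Re (csqrt z) > 0"
  then have r: "Re w = 0"
    using Re_csqrt[of z] by (simp add: w_def)
  have "Re (w^2) = - (Im w ^ 2)" and "Im (w^2) = 0"
    using r by (simp_all add: power2_eq_square)
  moreover have "w^2 = z"
    by (simp add: w_def)
  ultimately show False
    using assms by (simp add: complex_nonpos_Reals_iff)
qed

lemma root_quotients_mult_eq_cayley: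
  fixes P Q S t :: complex
  assumes "P \<noteq> 0" and "Q \<noteq> 0" and "S \<noteq> 0" and t: "t^2 = 1 - 4 * P * Q / S^2"
  shows "(S - S * t) / (2 * Q) * ((S - S * t) / (2 * P)) = cayley t"
proof -
  have prod: "(1 - t) * (1 + t) = 4 * P * Q / S^2"
    using t by (simp add: algebra_simps power2_eq_square)
  moreover have "4 * P * Q / S^2 \<noteq> 0"
    using assms by simp
  ultimately have "1 - t \<noteq> 0" and "1 + t \<noteq> 0"
    by auto
  have "(S - S * t) / (2 * Q) * ((S - S * t) / (2 * P)) = (1 - t)^2 / (4 * P * Q / S^2)"
    using assms by (simp add: field_simps power2_eq_square)
  also have "\<dots> = (1 - t)^2 / ((1 - t) * (1 + t))"
    by (simp add: prod)
  also have "\<dots> = cayley t"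
    using \<open>1 - t \<noteq> 0\<close> by (simp add: cayley_def power2_eq_square)
  finally show ?thesis .
qed

lemma C1_mult_C2_eq_cayley:
  assumes "pf a1 b1 s \<noteq> 0" and "pf a2 b2 s \<noteq> 0" and "s^2 + qf a1 b1 a2 b2 s \<noteq> 0"
  shows "C1 a1 b1 a2 b2 s * C2 a1 b1 a2 b2 s
    = cayley (csqrt (1 - 4 * pf a1 b1 s * pf a2 b2 s / (s^2 + qf a1 b1 a2 b2 s)^2))"
  unfolding C1_def C2_def mf_def
  by (rule root_quotients_mult_eq_cayley[OF assms]) simp

lemma isCont_cayley_csqrt:
  assumes "isCont f x" and "f x \<notin> \<real>\<^sub>\<le>\<^sub>0"
  shows "isCont (\<lambda>x. cayley (csqrt (f x))) x"
proof -
  have "Re (1 + csqrt (f x)) > 0"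
    using Re_csqrt_pos[OF assms(2)] by (simp only: plus_complex.sel one_complex.sel)
  then have "1 + csqrt (f x) \<noteq> 0"
    by (metis less_irrefl zero_complex.sel(1))
  then show ?thesis
    unfolding cayley_def using assms by (intro continuous_intros isCont_csqrt')
qed

lemma nonpos_Reals_one_minus_div_square:
  fixes r :: complex and c :: real
  assumes "c > 0" and "1 - c / r^2 \<in> \<real>\<^sub>\<le>\<^sub>0"
  shows "Im r = 0 \<and> (Re r)^2 \<le> c"
proof -
  obtain x where x: "1 - c / r^2 = of_real x" and "x \<le> 0"
    using assms(2) by (auto elim!: nonpos_Reals_cases)
  have cr: "c / r^2 = of_real (1 - x)"
    using x by (simp add: algebra_simps)
  have "1 - x > 0"
    using \<open>x \<le> 0\<close> by simp
  with cr have "r \<noteq> 0"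
    by (metis div_by_0 of_real_eq_0_iff order_less_irrefl power_zero_numeral)
  with cr have sq: "r^2 = of_real (c / (1 - x))"
    using \<open>1 - x > 0\<close> by (simp add: divide_eq_eq)
  have "c / (1 - x) > 0"
    using assms(1) \<open>1 - x > 0\<close> by simp
  then have "Re r * Im r = 0" and "(Re r)^2 - (Im r)^2 > 0"
    using arg_cong[OF sq, of Im] arg_cong[OF sq, of Re] by (auto simp: power2_eq_square)
  then have "Im r = 0"
    by auto
  moreover have "c / (1 - x) \<le> c"
    using assms(1) \<open>x \<le> 0\<close> by (simp add: divide_le_eq)
  ultimately show ?thesis
    using arg_cong[OF sq, of Re] by (simp add: power2_eq_square)
qed

text \<open>\<open>\<rho> = (s\<^sup>2 + q) / p\<^sub>1\<close> at \<open>s = j\<omega>\<close>, for \<open>p\<^sub>1 = a + b s\<close> and \<open>p\<^sub>2 = \<alpha> p\<^sub>1\<close>.\<close>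
definition rho :: "real \<Rightarrow> real \<Rightarrow> real \<Rightarrow> real \<Rightarrow> complex" where
  "rho a b \<alpha> \<omega> = 1 + of_real \<alpha> - of_real (\<omega>^2) / pf a b (\<i> * of_real \<omega>)"

lemma pf_imaginary_ne_0: "a > 0 \<Longrightarrow> pf a b (\<i> * of_real \<omega>) \<noteq> 0"
  by (auto simp: pf_def complex_eq_iff)

lemma Im_rho: "Im (rho a b \<alpha> \<omega>) = b * \<omega>^3 / (a^2 + b^2 * \<omega>^2)"
  by (simp add: rho_def pf_def Im_divide power2_eq_square power3_eq_cube algebra_simps)

lemma Im_rho_ne_0:
  assumes "b > 0" and "\<omega> \<noteq> 0"
  shows "Im (rho a b \<alpha> \<omega>) \<noteq> 0"
proof -
  have "a^2 + b^2 * \<omega>^2 > 0"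
    using assms by (simp add: add_nonneg_pos)
  then show ?thesis
    using assms by (simp add: Im_rho)
qed

lemma isCont_rho: "a > 0 \<Longrightarrow> isCont (rho a b \<alpha>) \<omega>"
  unfolding rho_def[abs_def] using pf_imaginary_ne_0[of a b \<omega>]
  by (intro continuous_intros) (auto simp: pf_def)

lemma rho_0: "a > 0 \<Longrightarrow> rho a b \<alpha> 0 = 1 + of_real \<alpha>"
  by (simp add: rho_def pf_imaginary_ne_0)

lemma rho_ne_0:
  assumes "a > 0" and "b > 0" and "\<alpha> > 0"
  shows "rho a b \<alpha> \<omega> \<noteq> 0"
  using assms Im_rho_ne_0[of b \<omega> a \<alpha>] rho_0[of a b \<alpha>]
  by (cases "\<omega> = 0") (auto simp: complex_eq_iff)

lemma radicand_notin_nonpos_Reals: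
  assumes "a > 0" and "b > 0" and "\<alpha> > 0" and "\<alpha> \<noteq> 1"
  shows "1 - of_real (4 * \<alpha>) / (rho a b \<alpha> \<omega>)^2 \<notin> \<real>\<^sub>\<le>\<^sub>0"
proof
  assume "1 - of_real (4 * \<alpha>) / (rho a b \<alpha> \<omega>)^2 \<in> \<real>\<^sub>\<le>\<^sub>0"
  then have Im0: "Im (rho a b \<alpha> \<omega>) = 0" and le: "(Re (rho a b \<alpha> \<omega>))^2 \<le> 4 * \<alpha>"
    using nonpos_Reals_one_minus_div_square[of "4 * \<alpha>"] assms(3) by auto
  have "\<omega> = 0"
    using Im0 Im_rho_ne_0[OF assms(2)] by blast
  then have "(1 + \<alpha>)^2 \<le> 4 * \<alpha>"
    using le by (simp add: rho_0[OF assms(1)])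
  then have "(\<alpha> - 1)^2 \<le> 0"
    by (simp add: power2_eq_square algebra_simps)
  then show False
    using assms(4) by simp
qed

lemma Im_rho_ge:
  assumes "a > 0" and "b > 0" and "a / b \<le> \<omega>"
  shows "\<omega> / (2 * b) \<le> Im (rho a b \<alpha> \<omega>)"
proof -
  have "\<omega> > 0"
    using assms by (smt (verit) divide_pos_pos)
  have "a \<le> b * \<omega>"
    using assms by (simp add: pos_divide_le_eq mult.commute)
  then have "a^2 \<le> b^2 * \<omega>^2"
    using assms(1) by (metis power_mono power_mult_distrib less_imp_le)
  then have "\<omega> * (a^2 + b^2 * \<omega>^2) \<le> 2 * b * (b * \<omega>^3)"
    using \<open>\<omega> > 0\<close> by (simp add: power2_eq_square power3_eq_cube algebra_simps)
  moreover have "a^2 + b^2 * \<omega>^2 > 0"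
    using assms(1) by (simp add: add_pos_nonneg)
  ultimately show ?thesis
    using assms(2) by (simp add: Im_rho field_simps)
qed

lemma radicand_defect_tendsto_0:
  assumes "a > 0" and "b > 0"
  shows "((\<lambda>\<omega>. of_real (4 * \<alpha>) / (rho a b \<alpha> \<omega>)^2) \<longlongrightarrow> 0) at_top"
proof (rule Lim_null_comparison)
  show "((\<lambda>\<omega>. 16 * \<bar>\<alpha>\<bar> * b^2 / \<omega>^2) \<longlongrightarrow> 0) at_top"
    by (intro tendsto_divide_0[OF tendsto_const] filterlim_at_top_imp_at_infinity
        filterlim_pow_at_top filterlim_ident) simp
  have "norm (of_real (4 * \<alpha>) / (rho a b \<alpha> \<omega>)^2) \<le> 16 * \<bar>\<alpha>\<bar> * b^2 / \<omega>^2" if "\<omega> \<ge> a / b" for \<omega>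
  proof -
    have "\<omega> > 0"
      using that assms by (smt (verit) divide_pos_pos)
    have "\<omega> / (2 * b) \<le> cmod (rho a b \<alpha> \<omega>)"
      using Im_rho_ge[OF assms that, of \<alpha>] abs_Im_le_cmod[of "rho a b \<alpha> \<omega>"] by linarith
    then have "(\<omega> / (2 * b))^2 \<le> cmod (rho a b \<alpha> \<omega>)^2"
      using assms(2) \<open>\<omega> > 0\<close> by (intro power_mono) auto
    then have "4 * \<bar>\<alpha>\<bar> / cmod (rho a b \<alpha> \<omega>)^2 \<le> 4 * \<bar>\<alpha>\<bar> / (\<omega> / (2 * b))^2"
      using \<open>\<omega> > 0\<close> assms(2) by (intro divide_left_mono mult_pos_pos) (auto simp: divide_le_0_iff)
    then show ?thesis
      using assms(2) by (simp add: norm_divide norm_power power_divide field_simps)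
  qed
  then show "eventually (\<lambda>\<omega>. norm (of_real (4 * \<alpha>) / (rho a b \<alpha> \<omega>)^2) \<le> 16 * \<bar>\<alpha>\<bar> * b^2 / \<omega>^2) at_top"
    by (auto simp: eventually_at_top_linorder)
qed

lemma C1_mult_C2_proportional:
  assumes "a > 0" and "b > 0" and "\<alpha> > 0"
  shows "C1 a b (\<alpha> * a) (\<alpha> * b) (\<i> * of_real \<omega>) * C2 a b (\<alpha> * a) (\<alpha> * b) (\<i> * of_real \<omega>)
    = cayley (csqrt (1 - of_real (4 * \<alpha>) / (rho a b \<alpha> \<omega>)^2))"
proof -
  let ?s = "\<i> * complex_of_real \<omega>" and ?p = "pf a b (\<i> * complex_of_real \<omega>)"
  have p: "?p \<noteq> 0"
    using pf_imaginary_ne_0[OF assms(1)] .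
  have p2: "pf (\<alpha> * a) (\<alpha> * b) ?s = of_real \<alpha> * ?p"
    by (simp add: pf_def algebra_simps)
  have S: "?s^2 + qf a b (\<alpha> * a) (\<alpha> * b) ?s = rho a b \<alpha> \<omega> * ?p"
    using p by (simp add: qf_def p2 rho_def field_simps power2_eq_square)
  have "4 * ?p * pf (\<alpha> * a) (\<alpha> * b) ?s / (?s^2 + qf a b (\<alpha> * a) (\<alpha> * b) ?s)^2
      = of_real (4 * \<alpha>) / (rho a b \<alpha> \<omega>)^2"
    unfolding S p2 using p by (simp add: power2_eq_square)
  moreover have "?s^2 + qf a b (\<alpha> * a) (\<alpha> * b) ?s \<noteq> 0"
    using p rho_ne_0[OF assms] by (simp add: S)
  ultimately show ?thesis
    using C1_mult_C2_eq_cayley[of a b ?s "\<alpha> * a" "\<alpha> * b"] p assms(3) by (simp add: p2)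
qed

theorem lemma2:
  fixes a1 b1 \<alpha> :: real
  assumes "a1 > 0" and "b1 > 0" and "\<alpha> > 0" and "\<alpha> \<noteq> 1"
  shows "bdd_above ((\<lambda>\<omega>. cmod (C1 a1 b1 (\<alpha> * a1) (\<alpha> * b1) (\<i> * complex_of_real \<omega>)
                                 * C2 a1 b1 (\<alpha> * a1) (\<alpha> * b1) (\<i> * complex_of_real \<omega>))) ` {0::real..})
       \<and> (SUP \<omega>\<in>{0::real..}. cmod (C1 a1 b1 (\<alpha> * a1) (\<alpha> * b1) (\<i> * complex_of_real \<omega>)
                                 * C2 a1 b1 (\<alpha> * a1) (\<alpha> * b1) (\<i> * complex_of_real \<omega>))) < 1"
proof -
  define W where "W \<omega> = of_real (4 * \<alpha>) / (rho a1 b1 \<alpha> \<omega>)^2" for \<omega>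
  define G where "G \<omega> = cmod (cayley (csqrt (1 - W \<omega>)))" for \<omega>
  have Re_pos: "Re (csqrt (1 - W \<omega>)) > 0" for \<omega>
    unfolding W_def by (rule Re_csqrt_pos[OF radicand_notin_nonpos_Reals[OF assms]])
  have contW: "isCont W \<omega>" for \<omega>
    unfolding W_def[abs_def] using isCont_rho[OF assms(1)] rho_ne_0[OF assms(1-3)]
    by (intro continuous_intros) auto
  have cont: "continuous_on {0..} G"
    unfolding G_def using radicand_notin_nonpos_Reals[OF assms]
    by (intro continuous_at_imp_continuous_on ballI continuous_intros isCont_cayley_csqrt contW)
      (simp add: W_def)
  have "eventually (\<lambda>\<omega>. cmod (W \<omega>) < 1/2) at_top"
    using tendsto_norm_zero[OF radicand_defect_tendsto_0[OF assms(1,2)]]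
    unfolding W_def by (rule order_tendstoD(2)) simp
  moreover have G_le: "G \<omega> \<le> cmod (W \<omega>)" for \<omega>
    unfolding G_def by (rule norm_cayley_le[OF Re_csqrt power2_csqrt])
  ultimately have small: "eventually (\<lambda>\<omega>. G \<omega> \<le> 1/2) at_top"
    by (elim eventually_mono) (meson G_le less_imp_le order.trans)
  have "bdd_above (G ` {0..}) \<and> (SUP \<omega>\<in>{0..}. G \<omega>) < 1"
    by (rule bdd_above_SUP_less_on_atLeast[OF cont _ small])
      (simp_all add: G_def norm_cayley_less_one[OF Re_pos])
  moreover have "cmod (C1 a1 b1 (\<alpha> * a1) (\<alpha> * b1) (\<i> * complex_of_real \<omega>)
      * C2 a1 b1 (\<alpha> * a1) (\<alpha> * b1) (\<i> * complex_of_real \<omega>)) = G \<omega>" for \<omega>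
    unfolding G_def W_def C1_mult_C2_proportional[OF assms(1-3)] ..
  ultimately show ?thesis
    by (simp only:)
qed

end
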